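(* In the setting described in the context, with $\mathsf{LP}=\sum_{i\in\mathcal F,j\in\mathcal C}x_{i,j}d(i,j)$, $$\sum_{v\in\mathcal C^*}\ \sum_{i\in\mathcal U_v}\ \sum_{j\in\mathcal C,\,j\neq v}x_{i,j}\,d(j,v)\ \le\ 2(\ell+1)\,\mathsf{LP}.$$
   Context: Setting: finite sets $\mathcal F$ (facility locations) and $\mathcal C$ (clients), a metric $d$ on $\mathcal F\cup\mathcal C$, positive integers $k,u,\ell$, and real numbers $x_{i,j}\ge0$, $y_i\ge0$ with $\sum_{i\in\mathcal F}x_{i,j}=1$ for all $j\in\mathcal C$, $\sum_iy_i\le k$, $x_{i,j}\le y_i$, $\sum_jx_{i,j}\le uy_i$. Let $d_{av}(j)=\sum_{i\in\mathcal F}x_{i,j}d(i,j)$. Construction of $\mathcal C^*$: start with $\mathcal C^*=\emptyset$ and $R=\mathcal C$; while $R\ne\emptyset$, choose $v\in R$ with smallest $d_{av}(v)$, add $v$ to $\mathcal C^*$, and remove from $R$ all $j\in R$ with $d(j,v)\le2\ell d_{av}(j)$. Each $i\in\mathcal F$ is put into $\mathcal U_v$ for one $v\in\mathcal C^*$ closest to $i$ (ties arbitrary), so $\{\mathcal U_v\}$ partitions $\mathcal F$. (The left-hand side is the cost of moving, for every $v\in\mathcal C^*$, $i\in\mathcal U_v$, $j\ne v$, $x_{i,j}$ units of demand from $j$ to $v$.) *)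

theory Defs
  imports Main Complex_Main
begin

definition metric_on :: "'a set \<Rightarrow> ('a \<Rightarrow> 'a \<Rightarrow> real) \<Rightarrow> bool" where
  "metric_on S d \<longleftrightarrow>
     (\<forall>a\<in>S. \<forall>b\<in>S. 0 \<le> d a b \<and> d a b = d b a \<and> (d a b = 0 \<longleftrightarrow> a = b)) \<and>
     (\<forall>a\<in>S. \<forall>b\<in>S. \<forall>c\<in>S. d a c \<le> d a b + d b c)"

definition dav :: "'a set \<Rightarrow> ('a \<Rightarrow> 'a \<Rightarrow> real) \<Rightarrow> ('a \<Rightarrow> 'a \<Rightarrow> real) \<Rightarrow> 'a \<Rightarrow> real" where
  "dav F d x j = (\<Sum>i\<in>F. x i j * d i j)"

fun remaining :: "'a set \<Rightarrow> ('a \<Rightarrow> 'a \<Rightarrow> real) \<Rightarrow> ('a \<Rightarrow> 'a \<Rightarrow> real) \<Rightarrow> nat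
                  \<Rightarrow> 'a set \<Rightarrow> 'a list \<Rightarrow> 'a set" where
  "remaining F d x l R [] = R"
| "remaining F d x l R (v # vs) =
     remaining F d x l (R - {j\<in>R. d j v \<le> 2 * real l * dav F d x j}) vs"

text \<open>vs is a possible run (sequence of chosen centres) of the greedy construction
  of C*: at each step the chosen v lies in the current R and has smallest d_av
  among R (ties arbitrary), and the loop stops exactly when R becomes empty.\<close>
definition greedy_run :: "'a set \<Rightarrow> 'a set \<Rightarrow> ('a \<Rightarrow> 'a \<Rightarrow> real) \<Rightarrow> ('a \<Rightarrow> 'a \<Rightarrow> real)
                          \<Rightarrow> nat \<Rightarrow> 'a list \<Rightarrow> bool" where
  "greedy_run F C d x l vs \<longleftrightarrow>
     (\<forall>t<length vs.
        vs ! t \<in> remaining F d x l C (take t vs) \<and>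
        (\<forall>j\<in>remaining F d x l C (take t vs). dav F d x (vs ! t) \<le> dav F d x j)) \<and>
     remaining F d x l C vs = {}"

end

theory Submission
  imports Defs
begin

text \<open>Every client j lies within 2 l d_av(j) of some centre of C*, since it was removed by
  one. For i \<in> \<U>_v the triangle inequality through that centre, together with the choice of
  v as closest centre to i, gives d(j,v) \<le> 2 d(i,j) + 2 l d_av(j). Weighting by x_{i,j} and
  using \<Sum>_i x_{i,j} = 1 turns the second term into 2 l \<Sum>_j d_av(j) = 2 l LP.\<close>

lemma metric_on_triangle:
  "metric_on S d \<Longrightarrow> a \<in> S \<Longrightarrow> b \<in> S \<Longrightarrow> c \<in> S \<Longrightarrow> d a c \<le> d a b + d b c"
  unfolding metric_on_def by blast

lemma metric_on_sym: "metric_on S d \<Longrightarrow> a \<in> S \<Longrightarrow> b \<in> S \<Longrightarrow> d a b = d b a"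
  unfolding metric_on_def by blast

lemma metric_on_self: "metric_on S d \<Longrightarrow> a \<in> S \<Longrightarrow> d a a = 0"
  unfolding metric_on_def by blast

lemma remaining_subset: "remaining F d x l R vs \<subseteq> R"
  by (induction vs arbitrary: R) force+

lemma remaining_empty_imp_close_centre:
  assumes "j \<in> R" and "remaining F d x l R vs = {}"
  shows "\<exists>v\<in>set vs. d j v \<le> 2 * real l * dav F d x j"
  using assms
proof (induction vs arbitrary: R)
  case Nil
  then show ?case by simp
next
  case (Cons v vs)
  show ?case
  proof (cases "d j v \<le> 2 * real l * dav F d x j")
    case False
    with Cons.prems have "j \<in> R - {j\<in>R. d j v \<le> 2 * real l * dav F d x j}" by auto
    from Cons.IH[OF this] Cons.prems show ?thesis by auto
  qed simp
qed

lemma greedy_run_centres_subset: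
  assumes "greedy_run F C d x l vs"
  shows "set vs \<subseteq> C"
proof
  fix v assume "v \<in> set vs"
  then obtain t where "t < length vs" "v = vs ! t" by (auto simp: in_set_conv_nth)
  with assms have "v \<in> remaining F d x l C (take t vs)" unfolding greedy_run_def by auto
  then show "v \<in> C" using remaining_subset[of F d x l C "take t vs"] by blast
qed

lemma greedy_run_close_centre:
  assumes "greedy_run F C d x l vs" and "j \<in> C"
  shows "\<exists>v\<in>set vs. d j v \<le> 2 * real l * dav F d x j"
  using assms(1) remaining_empty_imp_close_centre[OF assms(2)] unfolding greedy_run_def by simp

lemma dist_to_nearest_centre_le:
  assumes "metric_on S d" and "i \<in> S" and "j \<in> S" and "V \<subseteq> S"
    and "w \<in> V" and "\<forall>v\<in>V. d i w \<le> d i v" and "v' \<in> V"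
  shows "d j w \<le> 2 * d i j + d j v'"
proof -
  have "d j w \<le> d j i + d i w"
    using assms by (intro metric_on_triangle[OF assms(1)]) auto
  also have "d i w \<le> d i v'" using assms(6,7) by blast
  also have "d i v' \<le> d i j + d j v'"
    using assms by (intro metric_on_triangle[OF assms(1)]) auto
  finally show ?thesis using metric_on_sym[OF assms(1-3)] by linarith
qed

lemma moved_demand_cost_eq:
  assumes "finite F" and "finite C" and "metric_on (F \<union> C) d" and "set vs \<subseteq> C"
    and "\<And>i. i \<in> F \<Longrightarrow> \<sigma> i \<in> set vs"
  shows "(\<Sum>v\<in>set vs. \<Sum>i\<in>{i\<in>F. \<sigma> i = v}. \<Sum>j\<in>C - {v}. x i j * d j v)
           = (\<Sum>i\<in>F. \<Sum>j\<in>C. x i j * d j (\<sigma> i))"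
proof -
  have "(\<Sum>v\<in>set vs. \<Sum>i\<in>{i\<in>F. \<sigma> i = v}. \<Sum>j\<in>C - {v}. x i j * d j v)
      = (\<Sum>v\<in>set vs. \<Sum>i\<in>{i\<in>F. \<sigma> i = v}. \<Sum>j\<in>C - {\<sigma> i}. x i j * d j (\<sigma> i))"
    by (rule sum.cong[OF refl], rule sum.cong[OF refl]) simp
  also have "\<dots> = (\<Sum>i\<in>F. \<Sum>j\<in>C - {\<sigma> i}. x i j * d j (\<sigma> i))"
    by (rule sum.group[OF assms(1) finite_set]) (use assms(5) in auto)
  also have "\<dots> = (\<Sum>i\<in>F. \<Sum>j\<in>C. x i j * d j (\<sigma> i))"
  proof (rule sum.cong[OF refl])
    fix i assume "i \<in> F"
    then have "\<sigma> i \<in> F \<union> C" using assms(4,5) by auto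
    then show "(\<Sum>j\<in>C - {\<sigma> i}. x i j * d j (\<sigma> i)) = (\<Sum>j\<in>C. x i j * d j (\<sigma> i))"
      using metric_on_self[OF assms(3)] by (intro sum.mono_neutral_left assms(2)) auto
  qed
  finally show ?thesis .
qed

lemma sum_weighted_dav_eq:
  assumes "\<And>j. j \<in> C \<Longrightarrow> (\<Sum>i\<in>F. x i j) = 1"
  shows "(\<Sum>i\<in>F. \<Sum>j\<in>C. x i j * dav F d x j) = (\<Sum>i\<in>F. \<Sum>j\<in>C. x i j * d i j)"
proof -
  have "(\<Sum>i\<in>F. \<Sum>j\<in>C. x i j * dav F d x j) = (\<Sum>j\<in>C. (\<Sum>i\<in>F. x i j) * dav F d x j)"
    by (subst sum.swap) (simp only: sum_distrib_right)
  also have "\<dots> = (\<Sum>j\<in>C. \<Sum>i\<in>F. x i j * d i j)"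
    using assms by (simp add: dav_def)
  also have "\<dots> = (\<Sum>i\<in>F. \<Sum>j\<in>C. x i j * d i j)"
    by (rule sum.swap)
  finally show ?thesis .
qed

theorem lemma1:
  fixes F C :: "'a set" and d :: "'a \<Rightarrow> 'a \<Rightarrow> real"
    and k u l :: nat and x :: "'a \<Rightarrow> 'a \<Rightarrow> real" and y :: "'a \<Rightarrow> real"
    and vs :: "'a list" and \<sigma> :: "'a \<Rightarrow> 'a"
  assumes "finite F" and "finite C"
    and "metric_on (F \<union> C) d"
    and "k > 0" and "u > 0" and "l > 0"
    and "\<And>i j. i \<in> F \<Longrightarrow> j \<in> C \<Longrightarrow> x i j \<ge> 0"
    and "\<And>i. i \<in> F \<Longrightarrow> y i \<ge> 0"
    and "\<And>j. j \<in> C \<Longrightarrow> (\<Sum>i\<in>F. x i j) = 1"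
    and "(\<Sum>i\<in>F. y i) \<le> real k"
    and "\<And>i j. i \<in> F \<Longrightarrow> j \<in> C \<Longrightarrow> x i j \<le> y i"
    and "\<And>i. i \<in> F \<Longrightarrow> (\<Sum>j\<in>C. x i j) \<le> real u * y i"
    and "greedy_run F C d x l vs"
    and "\<And>i. i \<in> F \<Longrightarrow> \<sigma> i \<in> set vs \<and> (\<forall>v\<in>set vs. d i (\<sigma> i) \<le> d i v)"
  shows "(\<Sum>v\<in>set vs. \<Sum>i\<in>{i\<in>F. \<sigma> i = v}. \<Sum>j\<in>C - {v}. x i j * d j v)
           \<le> 2 * (real l + 1) * (\<Sum>i\<in>F. \<Sum>j\<in>C. x i j * d i j)"
proof -
  have centres: "set vs \<subseteq> C" using greedy_run_centres_subset[OF assms(13)] .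
  have reassign: "d j (\<sigma> i) \<le> 2 * d i j + 2 * real l * dav F d x j" if "i \<in> F" "j \<in> C" for i j
  proof -
    obtain v' where "v' \<in> set vs" "d j v' \<le> 2 * real l * dav F d x j"
      using greedy_run_close_centre[OF assms(13) \<open>j \<in> C\<close>] by blast
    moreover have "d j (\<sigma> i) \<le> 2 * d i j + d j v'"
      using that centres assms(14)[OF \<open>i \<in> F\<close>] \<open>v' \<in> set vs\<close>
      by (intro dist_to_nearest_centre_le[OF assms(3)]) auto
    ultimately show ?thesis by linarith
  qed
  have "(\<Sum>v\<in>set vs. \<Sum>i\<in>{i\<in>F. \<sigma> i = v}. \<Sum>j\<in>C - {v}. x i j * d j v)
      = (\<Sum>i\<in>F. \<Sum>j\<in>C. x i j * d j (\<sigma> i))"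
    using assms(14) by (intro moved_demand_cost_eq assms(1-3) centres) auto
  also have "\<dots> \<le> (\<Sum>i\<in>F. \<Sum>j\<in>C. x i j * (2 * d i j + 2 * real l * dav F d x j))"
    by (intro sum_mono mult_left_mono reassign assms(7))
  also have "\<dots> = 2 * (\<Sum>i\<in>F. \<Sum>j\<in>C. x i j * d i j)
        + 2 * real l * (\<Sum>i\<in>F. \<Sum>j\<in>C. x i j * dav F d x j)"
    by (simp add: distrib_left sum.distrib sum_distrib_left mult.assoc mult.left_commute)
  finally show ?thesis
    by (simp add: sum_weighted_dav_eq[OF assms(9)] algebra_simps)
qed

end
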